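(* If $f(z)=z+\sum_{n\ge2}a_nz^n$ belongs to $\mathcal{K}_{\sigma}$, then $|a_2a_4-a_3^2|\le\frac{1}{3}$.
   Context: $\mathbb{U}=\{z\in\mathbb{C}:|z|<1\}$. $\sigma$ denotes the class of analytic functions $f(z)=z+\sum_{n\ge2}a_nz^n$ on $\mathbb{U}$ that are univalent in $\mathbb{U}$ and whose inverse $g=f^{-1}$ is also univalent in $\mathbb{U}$. $\mathcal{K}_{\sigma}$ (bi-convex functions) is the set of $f\in\sigma$ with $\operatorname{Re}\left(1+\frac{zf''(z)}{f'(z)}\right)>0$ for $z\in\mathbb{U}$ and $\operatorname{Re}\left(1+\frac{wg''(w)}{g'(w)}\right)>0$ for $w\in\mathbb{U}$, where $g=f^{-1}$. *)

theory Defs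
  imports "HOL-Complex_Analysis.Complex_Analysis"
begin

definition unit_disc :: "complex set" where
  "unit_disc = ball 0 1"

definition normalized_univalent :: "(complex \<Rightarrow> complex) \<Rightarrow> bool" where
  "normalized_univalent f \<longleftrightarrow>
     f holomorphic_on unit_disc \<and> inj_on f unit_disc \<and> f 0 = 0 \<and> deriv f 0 = 1"

text \<open>g is (the univalent analytic continuation to the unit disc of) the inverse of f:
  g is holomorphic and univalent on the disc and inverts f near the origin.\<close>
definition is_univalent_inverse ::
  "(complex \<Rightarrow> complex) \<Rightarrow> (complex \<Rightarrow> complex) \<Rightarrow> bool" where
  "is_univalent_inverse f g \<longleftrightarrow>
     g holomorphic_on unit_disc \<and> inj_on g unit_disc \<and>
     (\<exists>r>0. \<forall>w\<in>ball 0 r. g w \<in> unit_disc \<and> f (g w) = w)"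

definition bi_univalent :: "(complex \<Rightarrow> complex) \<Rightarrow> bool" where
  "bi_univalent f \<longleftrightarrow> normalized_univalent f \<and> (\<exists>g. is_univalent_inverse f g)"

definition convex_cond :: "(complex \<Rightarrow> complex) \<Rightarrow> bool" where
  "convex_cond h \<longleftrightarrow>
     (\<forall>z\<in>unit_disc. Re (1 + z * deriv (deriv h) z / deriv h z) > 0)"

definition bi_convex :: "(complex \<Rightarrow> complex) \<Rightarrow> bool" where
  "bi_convex f \<longleftrightarrow> normalized_univalent f \<and> convex_cond f \<and>
     (\<exists>g. is_univalent_inverse f g \<and> convex_cond g)"

definition taylor_coeff :: "(complex \<Rightarrow> complex) \<Rightarrow> nat \<Rightarrow> complex" where
  "taylor_coeff f n = (deriv ^^ n) f 0 / of_nat (fact n)"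

end

theory Submission
  imports Defs
begin

text \<open>
  Since \<open>p = 1 + z f''/f'\<close> has positive real part, its
  Cayley transform \<open>w = (p - 1)/(p + 1)\<close> maps the disc into itself and vanishes at 0, so by
  Cauchy's estimate the Taylor coefficients of \<open>w\<close>, \<open>w\<^sup>2\<close> and \<open>w\<^sup>3\<close> have modulus at most 1.
  Comparing coefficients in \<open>w (2 f' + z f'') = z f''\<close> expresses \<open>a\<^sub>2, a\<^sub>3, a\<^sub>4\<close> through the
  coefficients \<open>c\<^sub>1, c\<^sub>2, c\<^sub>3\<close> of \<open>w\<close>, and then
  \<open>a\<^sub>2 a\<^sub>4 - a\<^sub>3\<^sup>2 = (2 c\<^sub>1 c\<^sub>3 + c\<^sub>2\<^sup>2)/12 + 3 c\<^sub>1\<^sup>2 c\<^sub>2/18 - 7 c\<^sub>2\<^sup>2/36\<close>,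
  whose modulus is at most \<open>1/12 + 1/18 + 7/36 = 1/3\<close>.
\<close>

lemma taylor_coeff_transform_within_open:
  assumes "f holomorphic_on S" "g holomorphic_on S" "open S" "0 \<in> S"
    and "\<And>z. z \<in> S \<Longrightarrow> f z = g z"
  shows "taylor_coeff f n = taylor_coeff g n"
  by (simp add: taylor_coeff_def higher_deriv_transform_within_open[OF assms])

lemma taylor_coeff_mult:
  assumes "f holomorphic_on S" "g holomorphic_on S" "open S" "0 \<in> S"
  shows "taylor_coeff (\<lambda>z. f z * g z) n = (\<Sum>i = 0..n. taylor_coeff f i * taylor_coeff g (n - i))"
proof -
  have "taylor_coeff (\<lambda>z. f z * g z) n =
      (\<Sum>i = 0..n. of_nat (n choose i) * (deriv ^^ i) f 0 * (deriv ^^ (n - i)) g 0) / fact n"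
    unfolding taylor_coeff_def higher_deriv_mult[OF assms] by simp
  also have "\<dots> = (\<Sum>i = 0..n. taylor_coeff f i * taylor_coeff g (n - i))"
    unfolding sum_divide_distrib
    by (rule sum.cong) (auto simp: taylor_coeff_def binomial_fact fact_binomial)
  finally show ?thesis .
qed

lemma taylor_coeff_add:
  assumes "f holomorphic_on S" "g holomorphic_on S" "open S" "0 \<in> S"
  shows "taylor_coeff (\<lambda>z. f z + g z) n = taylor_coeff f n + taylor_coeff g n"
  unfolding taylor_coeff_def higher_deriv_add[OF assms] by (simp add: add_divide_distrib)

lemma taylor_coeff_cmult:
  assumes "f holomorphic_on S" "open S" "0 \<in> S"
  shows "taylor_coeff (\<lambda>z. c * f z) n = c * taylor_coeff f n"
  unfolding taylor_coeff_def higher_deriv_cmult[OF assms(1,3,2)] by simp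

lemma taylor_coeff_0: "taylor_coeff f 0 = f 0"
  by (simp add: taylor_coeff_def)

lemma taylor_coeff_deriv: "taylor_coeff (deriv f) n = of_nat (Suc n) * taylor_coeff f (Suc n)"
  unfolding taylor_coeff_def fact_Suc of_nat_mult
  by (simp add: funpow_Suc_right del: funpow.simps(2) of_nat_Suc)

lemma taylor_coeff_times_deriv:
  assumes "f holomorphic_on S" "open S" "0 \<in> S"
  shows "taylor_coeff (\<lambda>z. z * deriv f z) n = of_nat n * taylor_coeff f n"
proof -
  have "taylor_coeff (\<lambda>z. z * deriv f z) n =
      (\<Sum>i = 0..n. taylor_coeff (\<lambda>z. z) i * taylor_coeff (deriv f) (n - i))"
    using assms by (intro taylor_coeff_mult holomorphic_intros holomorphic_deriv) auto
  also have "\<dots> = (\<Sum>i = 0..n. if i = 1 then taylor_coeff (deriv f) (n - 1) else 0)"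
    by (rule sum.cong) (auto simp: taylor_coeff_def)
  also have "\<dots> = of_nat n * taylor_coeff f n"
    by (cases n) (auto simp: taylor_coeff_deriv)
  finally show ?thesis .
qed

lemma norm_taylor_coeff_le_1:
  assumes hol: "f holomorphic_on ball 0 1" and bound: "\<And>z. z \<in> ball 0 1 \<Longrightarrow> cmod (f z) < 1"
  shows "cmod (taylor_coeff f n) \<le> 1"
proof -
  have Cauchy: "cmod ((deriv ^^ n) f 0) \<le> fact n * 1 / r ^ n" if r: "0 < r" "r < 1" for r
  proof (rule Cauchy_inequality)
    show "f holomorphic_on ball 0 r"
      using hol by (rule holomorphic_on_subset) (use r in auto)
    show "continuous_on (cball 0 r) f"
      using holomorphic_on_imp_continuous_on[OF hol] by (rule continuous_on_subset) (use r in auto)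
    show "cmod (f x) \<le> 1" if "cmod (0 - x) = r" for x
      using bound[of x] that r by (simp add: less_imp_le)
  qed (use r in auto)
  have "((\<lambda>r::real. fact n * 1 / r ^ n) \<longlongrightarrow> fact n * 1 / 1 ^ n) (at_left 1)"
    by (intro tendsto_intros) auto
  moreover have "\<forall>\<^sub>F r in at_left 1. cmod ((deriv ^^ n) f 0) \<le> fact n * 1 / r ^ n"
    by (rule eventually_mono[OF eventually_at_left_real[of 0 1]]) (use Cauchy in auto)
  ultimately have "cmod ((deriv ^^ n) f 0) \<le> fact n * 1 / 1 ^ n"
    by (rule tendsto_lowerbound) simp
  then show ?thesis
    by (simp add: taylor_coeff_def norm_divide)
qed

lemma norm_cayley_less_1:
  fixes p :: complex
  assumes "Re p > 0"
  shows "cmod ((p - 1) / (p + 1)) < 1"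
proof -
  have "(cmod (p - 1))\<^sup>2 < (cmod (p + 1))\<^sup>2"
    using assms unfolding cmod_power2 by (simp add: power2_eq_square algebra_simps)
  then have "cmod (p - 1) < cmod (p + 1)"
    by (simp add: power_less_imp_less_base)
  then show ?thesis
    by (simp add: norm_divide divide_less_eq)
qed

lemma convex_cond_imp_schwarz_function:
  assumes hol: "f holomorphic_on unit_disc" and regular: "\<And>z. z \<in> unit_disc \<Longrightarrow> deriv f z \<noteq> 0"
    and convex: "convex_cond f"
  obtains w where "w holomorphic_on unit_disc" "\<And>z. z \<in> unit_disc \<Longrightarrow> cmod (w z) < 1" "w 0 = 0"
    "\<And>z. z \<in> unit_disc \<Longrightarrow> w z * (2 * deriv f z + z * deriv (deriv f) z) = z * deriv (deriv f) z"
proof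
  define p where "p z = 1 + z * deriv (deriv f) z / deriv f z" for z
  define w where "w z = (p z - 1) / (p z + 1)" for z
  have open_disc: "open unit_disc" by (simp add: unit_disc_def)
  have Re_p: "Re (p z) > 0" if "z \<in> unit_disc" for z
    using convex that by (simp add: convex_cond_def p_def)
  have p_plus_1: "p z + 1 \<noteq> 0" if "z \<in> unit_disc" for z
    using Re_p[OF that] by (auto simp: complex_eq_iff)
  show "w holomorphic_on unit_disc"
    unfolding w_def p_def using p_plus_1 regular
    by (intro holomorphic_intros holomorphic_deriv hol open_disc) (auto simp: p_def)
  show "cmod (w z) < 1" if "z \<in> unit_disc" for z
    unfolding w_def using norm_cayley_less_1[OF Re_p[OF that]] .
  show "w 0 = 0"
    by (simp add: w_def p_def)
  show "w z * (2 * deriv f z + z * deriv (deriv f) z) = z * deriv (deriv f) z"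
    if "z \<in> unit_disc" for z
    using p_plus_1[OF that] regular[OF that] by (simp add: w_def p_def field_simps)
qed

lemma taylor_coeff_recurrence_of_schwarz_relation:
  assumes hol_f: "f holomorphic_on S" and hol_w: "w holomorphic_on S" and S: "open S" "0 \<in> S"
    and rel: "\<And>z. z \<in> S \<Longrightarrow> w z * (2 * deriv f z + z * deriv (deriv f) z) = z * deriv (deriv f) z"
  \<comment> \<open>\<open>(k + 1)(k + 2) a\<^sub>k\<^sub>+\<^sub>1\<close> is the \<open>k\<close>-th Taylor coefficient of \<open>2 f' + z f''\<close>\<close>
  shows "(\<Sum>i = 0..n. taylor_coeff w i * (of_nat ((n - i + 1) * (n - i + 2)) * taylor_coeff f (n - i + 1)))
           = of_nat (n * (n + 1)) * taylor_coeff f (n + 1)"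
proof -
  define H where "H z = 2 * deriv f z + z * deriv (deriv f) z" for z
  have hol_f': "deriv f holomorphic_on S"
    using hol_f S(1) by (rule holomorphic_deriv)
  have hol_H: "H holomorphic_on S"
    unfolding H_def by (intro holomorphic_intros holomorphic_deriv hol_f' S(1))
  have zf'': "taylor_coeff (\<lambda>z. z * deriv (deriv f) z) k = of_nat (k * (k + 1)) * taylor_coeff f (k + 1)" for k
    by (simp add: taylor_coeff_times_deriv[OF hol_f' S] taylor_coeff_deriv algebra_simps)
  have H: "taylor_coeff H k = of_nat ((k + 1) * (k + 2)) * taylor_coeff f (k + 1)" for k
  proof -
    have "taylor_coeff H k = 2 * taylor_coeff (deriv f) k + taylor_coeff (\<lambda>z. z * deriv (deriv f) z) k"
      unfolding H_def
      by (subst taylor_coeff_add[OF _ _ S], (intro holomorphic_intros holomorphic_deriv hol_f' S(1))+)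
        (simp add: taylor_coeff_cmult[OF hol_f' S])
    then show ?thesis
      by (simp add: zf'' taylor_coeff_deriv algebra_simps)
  qed
  have "taylor_coeff (\<lambda>z. w z * H z) n = taylor_coeff (\<lambda>z. z * deriv (deriv f) z) n"
    by (rule taylor_coeff_transform_within_open[OF _ _ S])
      (use rel in \<open>auto simp: H_def intro!: holomorphic_intros holomorphic_deriv hol_w hol_f' S(1)\<close>)
  then show ?thesis
    by (simp add: taylor_coeff_mult[OF hol_w hol_H S] H zf'' Suc_diff_le)
qed

lemma schwarz_function_taylor_coeff_bounds:
  assumes hol: "w holomorphic_on ball 0 1" and bound: "\<And>z. z \<in> ball 0 1 \<Longrightarrow> cmod (w z) < 1"
    and "w 0 = 0"
  defines "c \<equiv> taylor_coeff w"
  shows "cmod (c 2) \<le> 1" "cmod (2 * c 1 * c 3 + (c 2)\<^sup>2) \<le> 1" "cmod (3 * (c 1)\<^sup>2 * c 2) \<le> 1"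
proof -
  have S: "open (ball (0::complex) 1)" "0 \<in> ball (0::complex) 1" by auto
  have c0: "c 0 = 0"
    using \<open>w 0 = 0\<close> by (simp add: c_def taylor_coeff_0)
  have hol2: "(\<lambda>z. w z * w z) holomorphic_on ball 0 1"
    using hol by (intro holomorphic_intros)
  have hol3: "(\<lambda>z. w z * (w z * w z)) holomorphic_on ball 0 1"
    using hol by (intro holomorphic_intros)
  have square: "taylor_coeff (\<lambda>z. w z * w z) k = (\<Sum>i = 0..k. c i * c (k - i))" for k
    unfolding c_def by (rule taylor_coeff_mult[OF hol hol S])
  have cube: "taylor_coeff (\<lambda>z. w z * (w z * w z)) 4 = 3 * (c 1)\<^sup>2 * c 2"
    using c0 by (simp add: taylor_coeff_mult[OF hol hol2 S] square c_def[symmetric] eval_nat_numeral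
        algebra_simps power2_eq_square)
  have bound2: "cmod (w z * w z) < 1" and bound3: "cmod (w z * (w z * w z)) < 1"
    if "z \<in> ball 0 1" for z
  proof -
    have "cmod (w z) ^ 2 < 1" "cmod (w z) ^ 3 < 1"
      using bound[OF that] by (simp_all add: power_less_one_iff)
    then show "cmod (w z * w z) < 1" "cmod (w z * (w z * w z)) < 1"
      by (simp_all add: norm_mult power2_eq_square power3_eq_cube)
  qed
  show "cmod (c 2) \<le> 1"
    unfolding c_def by (rule norm_taylor_coeff_le_1[OF hol bound])
  show "cmod (2 * c 1 * c 3 + (c 2)\<^sup>2) \<le> 1"
    using norm_taylor_coeff_le_1[OF hol2 bound2, of 4] c0
    by (simp add: square eval_nat_numeral algebra_simps power2_eq_square)
  show "cmod (3 * (c 1)\<^sup>2 * c 2) \<le> 1"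
    using norm_taylor_coeff_le_1[OF hol3 bound3, of 4] by (simp add: cube)
qed

lemma hankel_bound_of_coeff_relations:
  fixes a2 a3 a4 c1 c2 c3 :: complex
  assumes "a2 = c1" "6 * a3 = 2 * c2 + 6 * c1 * a2" "12 * a4 = 2 * c3 + 6 * c2 * a2 + 12 * c1 * a3"
    and "cmod c2 \<le> 1" "cmod (2 * c1 * c3 + c2\<^sup>2) \<le> 1" "cmod (3 * c1\<^sup>2 * c2) \<le> 1"
  shows "cmod (a2 * a4 - a3\<^sup>2) \<le> 1 / 3"
proof -
  have "a2 * a4 - a3\<^sup>2 = (2 * c1 * c3 + c2\<^sup>2) / 12 + (3 * c1\<^sup>2 * c2) / 18 - 7 / 36 * c2\<^sup>2"
  proof -
    have a3: "a3 = (2 * c2 + 6 * c1 * a2) / 6" and a4: "a4 = (2 * c3 + 6 * c2 * a2 + 12 * c1 * a3) / 12"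
      using assms(2,3) by (simp_all add: field_simps)
    show ?thesis
      unfolding a4 a3 assms(1) by (simp add: field_simps power2_eq_square)
  qed
  also have "cmod \<dots> \<le> cmod (2 * c1 * c3 + c2\<^sup>2) / 12 + cmod (3 * c1\<^sup>2 * c2) / 18 + 7 / 36 * (cmod c2)\<^sup>2"
    using norm_triangle_ineq4[of "(2 * c1 * c3 + c2\<^sup>2) / 12 + (3 * c1\<^sup>2 * c2) / 18" "7 / 36 * c2\<^sup>2"]
      norm_triangle_ineq[of "(2 * c1 * c3 + c2\<^sup>2) / 12" "(3 * c1\<^sup>2 * c2) / 18"]
    by (simp add: norm_divide norm_mult norm_power)
  also have "\<dots> \<le> 1 / 12 + 1 / 18 + 7 / 36 * 1"
    using assms(4-6) by (intro add_mono mult_left_mono) (auto simp: power_le_one)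
  finally show ?thesis by simp
qed

theorem corollary4p7:
  fixes f :: "complex \<Rightarrow> complex"
  assumes "bi_convex f"
  shows "cmod (taylor_coeff f 2 * taylor_coeff f 4 - (taylor_coeff f 3)\<^sup>2) \<le> 1 / 3"
proof -
  have hol: "f holomorphic_on unit_disc" and inj: "inj_on f unit_disc"
    and "deriv f 0 = 1" and "convex_cond f"
    using assms by (auto simp: bi_convex_def normalized_univalent_def)
  have disc: "open unit_disc" "0 \<in> unit_disc"
    by (auto simp: unit_disc_def)
  have "deriv f z \<noteq> 0" if "z \<in> unit_disc" for z
    using holomorphic_injective_imp_regular[OF hol disc(1) inj that] .
  then obtain w where hol_w: "w holomorphic_on unit_disc" and bound: "\<And>z. z \<in> unit_disc \<Longrightarrow> cmod (w z) < 1"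
    and "w 0 = 0"
    and rel: "\<And>z. z \<in> unit_disc \<Longrightarrow> w z * (2 * deriv f z + z * deriv (deriv f) z) = z * deriv (deriv f) z"
    using convex_cond_imp_schwarz_function[OF hol _ \<open>convex_cond f\<close>] by blast
  define a where "a = taylor_coeff f"
  define c where "c = taylor_coeff w"
  note rec = taylor_coeff_recurrence_of_schwarz_relation[OF hol hol_w disc rel, folded a_def c_def]
  have "a 1 = 1" "c 0 = 0"
    using \<open>deriv f 0 = 1\<close> \<open>w 0 = 0\<close> by (simp_all add: a_def c_def taylor_coeff_def)
  then have "a 2 = c 1" "6 * a 3 = 2 * c 2 + 6 * c 1 * a 2" "12 * a 4 = 2 * c 3 + 6 * c 2 * a 2 + 12 * c 1 * a 3"
    using rec[of 1] rec[of 2] rec[of 3] by (simp_all add: eval_nat_numeral algebra_simps)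
  then show ?thesis
    using schwarz_function_taylor_coeff_bounds[OF hol_w[unfolded unit_disc_def] bound[unfolded unit_disc_def]
        \<open>w 0 = 0\<close>, folded c_def]
    unfolding a_def by (rule hankel_bound_of_coeff_relations)
qed

end
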